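(* Let $k\ge 1$ and let $\zeta_1,\dots,\zeta_k>-1$ and $\alpha_1,\dots,\alpha_k>0$ be real. Let $x_1,\dots,x_k$ be mutually independent real random variables, $x_j$ having the type-1 beta density $$f_j(x_j)=\frac{\Gamma(\alpha_j+\zeta_j+1)}{\Gamma(\alpha_j)\Gamma(\zeta_j+1)}x_j^{\zeta_j}(1-x_j)^{\alpha_j-1},\quad 0<x_j<1,$$ and $f_j=0$ elsewhere. Let $(v_1,\dots,v_k)$ be a random vector of positive real random variables with an arbitrary joint density $f(v_1,\dots,v_k)$ on $(0,\infty)^k$, and assume $(x_1,\dots,x_k)$ and $(v_1,\dots,v_k)$ are independent. Put $u_j=x_jv_j$, $j=1,\dots,k$, and let $g(u_1,\dots,u_k)$ denote the joint density of $(u_1,\dots,u_k)$. Then, for (almost every) $(u_1,\dots,u_k)\in(0,\infty)^k$, $$\Big\{\prod_{j=1}^k\frac{\Gamma(\zeta_j+1)}{\Gamma(\alpha_j+\zeta_j+1)}\Big\}\,g(u_1,\dots,u_k)=K_{u_j,j=1,\dots,k}^{(\zeta_j,\alpha_j),j=1,\dots,k}f(u_1,\dots,u_k).$$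
   Context: The multivariable Kober fractional integral operator of the second kind is defined by $$K_{u_j,j=1,\dots,k}^{(\zeta_j,\alpha_j),j=1,\dots,k}f(u_1,\dots,u_k)=\Big\{\prod_{j=1}^k\frac{u_j^{\zeta_j}}{\Gamma(\alpha_j)}\Big\}\int_{v_1>u_1}\cdots\int_{v_k>u_k}\Big\{\prod_{j=1}^k(v_j-u_j)^{\alpha_j-1}v_j^{-\zeta_j-\alpha_j}\Big\}f(v_1,\dots,v_k)\,dv_1\cdots dv_k.$$ *)

theory Defs
  imports "HOL-Probability.Probability"
begin

definition beta1_density :: "real \<Rightarrow> real \<Rightarrow> real \<Rightarrow> real" where
  "beta1_density \<zeta> \<alpha> t =
     (if 0 < t \<and> t < 1
      then Gamma (\<alpha> + \<zeta> + 1) / (Gamma \<alpha> * Gamma (\<zeta> + 1)) * t powr \<zeta> * (1 - t) powr (\<alpha> - 1)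
      else 0)"

text \<open>Multivariable Kober fractional integral operator of the second kind on
  functions of k real variables (points of R^k represented as extensional functions on {..<k}).\<close>
definition kober2 :: "nat \<Rightarrow> (nat \<Rightarrow> real) \<Rightarrow> (nat \<Rightarrow> real) \<Rightarrow> ((nat \<Rightarrow> real) \<Rightarrow> ennreal)
    \<Rightarrow> (nat \<Rightarrow> real) \<Rightarrow> ennreal" where
  "kober2 k \<zeta> \<alpha> f u =
     ennreal (\<Prod>j<k. u j powr \<zeta> j / Gamma (\<alpha> j)) *
     (\<integral>\<^sup>+ v. indicator {v. \<forall>j<k. u j < v j} v *
         ennreal (\<Prod>j<k. (v j - u j) powr (\<alpha> j - 1) * v j powr (- \<zeta> j - \<alpha> j)) * f v
       \<partial>(PiM {..<k} (\<lambda>_. lborel)))"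

end

theory Submission
  imports Defs
begin

(* Conditionally on V = v, the coordinates x_j v_j are independent with densities
   f_j(u_j / v_j) / v_j, so averaging over the law of V gives
     g(u) = integral of f(v) * prod_j f_j(u_j / v_j) / v_j dv.
   For u_j > 0 the factor f_j(u_j / v_j) vanishes unless v_j > u_j, and then
     Gamma(zeta_j + 1) / Gamma(alpha_j + zeta_j + 1) * f_j(u_j / v_j) / v_j
       = u_j^zeta_j (v_j - u_j)^(alpha_j - 1) v_j^(-zeta_j - alpha_j) / Gamma(alpha_j),
   which is the kernel of the Kober operator. *)

lemma sigma_finite_density_lborel_real:
  fixes b :: "real \<Rightarrow> real"
  assumes "b \<in> borel_measurable borel"
  shows "sigma_finite_measure (density lborel (\<lambda>t. ennreal (b t)))"
  using assms
  by (subst sigma_finite_measure.sigma_finite_iff_density_finite'[OF lborel.sigma_finite_measure_axioms])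
     auto

lemma distr_density_lborel_mult_right:
  fixes b :: "real \<Rightarrow> real" and c :: real
  assumes [measurable]: "b \<in> borel_measurable borel" and c: "c > 0"
  shows "distr (density lborel (\<lambda>t. ennreal (b t))) lborel (\<lambda>t. t * c) =
         density lborel (\<lambda>u. ennreal (b (u / c) / c))"
proof (rule measure_eqI)
  fix A assume "A \<in> sets (distr (density lborel (\<lambda>t. ennreal (b t))) lborel (\<lambda>t. t * c))"
  then have [measurable]: "A \<in> sets borel" by simp
  have [measurable]: "(\<lambda>t. t * c) -` A \<in> sets borel"
    by (rule measurable_sets_borel[of _ borel]) auto
  have "emeasure (distr (density lborel (\<lambda>t. ennreal (b t))) lborel (\<lambda>t. t * c)) A
      = (\<integral>\<^sup>+ t. ennreal (b t) * indicator A (t * c) \<partial>lborel)"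
    by (subst emeasure_distr) (auto simp: emeasure_density indicator_def intro!: nn_integral_cong)
  also have "\<dots> = ennreal \<bar>1/c\<bar> *
      (\<integral>\<^sup>+ u. ennreal (b (0 + 1/c * u)) * indicator A ((0 + 1/c * u) * c) \<partial>lborel)"
    by (rule nn_integral_real_affine) (use c in auto)
  also have "\<dots> = (\<integral>\<^sup>+ u. ennreal (b (u / c) / c) * indicator A u \<partial>lborel)"
    using c by (subst nn_integral_cmult[symmetric])
      (auto intro!: nn_integral_cong simp: ennreal_mult'[symmetric] field_simps)
  also have "\<dots> = emeasure (density lborel (\<lambda>u. ennreal (b (u / c) / c))) A"
    by (simp add: emeasure_density)
  finally show "emeasure (distr (density lborel (\<lambda>t. ennreal (b t))) lborel (\<lambda>t. t * c)) A = \<dots>" .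
qed simp

lemma PiM_density_lborel:
  fixes I :: "'i set" and b :: "'i \<Rightarrow> real \<Rightarrow> real"
  assumes "finite I" and [measurable]: "\<And>i. b i \<in> borel_measurable borel"
  shows "PiM I (\<lambda>i. density lborel (\<lambda>t. ennreal (b i t))) =
         density (PiM I (\<lambda>_. lborel)) (\<lambda>x. \<Prod>i\<in>I. ennreal (b i (x i)))"
proof -
  interpret D: product_sigma_finite "\<lambda>i. density lborel (\<lambda>t. ennreal (b i t))"
    by (simp add: product_sigma_finite_def sigma_finite_density_lborel_real)
  interpret L: product_sigma_finite "\<lambda>_::'i. lborel :: real measure"
    by (simp add: product_sigma_finite_def lborel.sigma_finite_measure_axioms)
  show ?thesis
  proof (rule D.PiM_eqI[symmetric])
    fix A assume A: "\<And>i. i \<in> I \<Longrightarrow> A i \<in> sets (density lborel (\<lambda>t. ennreal (b i t)))"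
    then have [measurable]: "\<And>i. i \<in> I \<Longrightarrow> A i \<in> sets borel" by simp
    have "emeasure (density (PiM I (\<lambda>_. lborel)) (\<lambda>x. \<Prod>i\<in>I. ennreal (b i (x i)))) (PiE I A)
        = (\<integral>\<^sup>+ x. (\<Prod>i\<in>I. ennreal (b i (x i)) * indicator (A i) (x i)) \<partial>PiM I (\<lambda>_. lborel))"
      using A \<open>finite I\<close>
      by (subst emeasure_density)
         (auto intro!: sets_PiM_I_finite nn_integral_cong simp: prod.distrib indicator_def space_PiM PiE_iff)
    also have "\<dots> = (\<Prod>i\<in>I. emeasure (density lborel (\<lambda>t. ennreal (b i t))) (A i))"
      using A \<open>finite I\<close> by (subst L.product_nn_integral_prod) (auto simp: emeasure_density)
    finally show "emeasure (density (PiM I (\<lambda>_. lborel)) (\<lambda>x. \<Prod>i\<in>I. ennreal (b i (x i)))) (PiE I A) = \<dots>" .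
  qed (auto simp: assms intro!: sets_PiM_cong)
qed

lemma distr_PiM_density_lborel_scale:
  fixes I :: "'i set" and b :: "'i \<Rightarrow> real \<Rightarrow> real" and v :: "'i \<Rightarrow> real"
  assumes I: "finite I" and [measurable]: "\<And>i. b i \<in> borel_measurable borel"
    and v: "\<And>i. i \<in> I \<Longrightarrow> v i > 0"
  shows "distr (PiM I (\<lambda>i. density lborel (\<lambda>t. ennreal (b i t)))) (PiM I (\<lambda>_. lborel))
           (\<lambda>x. \<lambda>i\<in>I. x i * v i) =
         density (PiM I (\<lambda>_. lborel)) (\<lambda>u. \<Prod>i\<in>I. ennreal (b i (u i / v i) / v i))"
proof -
  let ?P = "\<lambda>i. density lborel (\<lambda>t. ennreal (b i t))"
  let ?Q = "\<lambda>i. density lborel (\<lambda>u. ennreal (b i (u / v i) / v i))"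
  interpret P: product_sigma_finite ?P
    by (simp add: product_sigma_finite_def sigma_finite_density_lborel_real)
  interpret Q: product_sigma_finite ?Q
    by (simp add: product_sigma_finite_def sigma_finite_density_lborel_real)
  have sets_P: "sets (PiM I ?P) = sets (PiM I (\<lambda>_. lborel))"
    by (intro sets_PiM_cong) auto
  have [measurable]: "(\<lambda>x. \<lambda>i\<in>I. x i * v i) \<in> PiM I ?P \<rightarrow>\<^sub>M PiM I (\<lambda>_. lborel)"
    unfolding measurable_cong_sets[OF sets_P refl] by measurable
  have "distr (PiM I ?P) (PiM I (\<lambda>_. lborel)) (\<lambda>x. \<lambda>i\<in>I. x i * v i) = PiM I ?Q"
  proof (rule Q.PiM_eqI)
    fix A assume A: "\<And>i. i \<in> I \<Longrightarrow> A i \<in> sets (?Q i)"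
    then have [measurable]: "\<And>i. i \<in> I \<Longrightarrow> A i \<in> sets borel" by simp
    have "(\<lambda>x. \<lambda>i\<in>I. x i * v i) -` PiE I A \<inter> space (PiM I ?P) = PiE I (\<lambda>i. (\<lambda>t. t * v i) -` A i)"
      by (auto simp: space_PiM PiE_iff)
    then have "emeasure (distr (PiM I ?P) (PiM I (\<lambda>_. lborel)) (\<lambda>x. \<lambda>i\<in>I. x i * v i)) (PiE I A)
        = emeasure (PiM I ?P) (PiE I (\<lambda>i. (\<lambda>t. t * v i) -` A i))"
      using A I by (subst emeasure_distr) (auto intro!: sets_PiM_I_finite)
    also have "\<dots> = (\<Prod>i\<in>I. emeasure (?P i) ((\<lambda>t. t * v i) -` A i))"
      using A I measurable_sets_borel[of "\<lambda>t. t * v _" borel "A _"] by (intro P.emeasure_PiM) auto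
    also have "\<dots> = (\<Prod>i\<in>I. emeasure (distr (?P i) lborel (\<lambda>t. t * v i)) (A i))"
      using A by (intro prod.cong refl) (subst emeasure_distr, auto)
    also have "\<dots> = (\<Prod>i\<in>I. emeasure (?Q i) (A i))"
      using v by (intro prod.cong refl) (simp add: distr_density_lborel_mult_right)
    finally show "emeasure (distr (PiM I ?P) (PiM I (\<lambda>_. lborel)) (\<lambda>x. \<lambda>i\<in>I. x i * v i)) (PiE I A) = \<dots>" .
  qed (auto intro!: sets_PiM_cong I)
  also have "\<dots> = density (PiM I (\<lambda>_. lborel)) (\<lambda>u. \<Prod>i\<in>I. ennreal (b i (u i / v i) / v i))"
    by (rule PiM_density_lborel) (auto simp: I)
  finally show ?thesis .
qed

lemma (in prob_space) indep_vars_distr_eq_PiM_density: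
  fixes X :: "'i \<Rightarrow> 'a \<Rightarrow> real" and d :: "'i \<Rightarrow> real \<Rightarrow> ennreal"
  assumes "I \<noteq> {}" and indep: "indep_vars (\<lambda>_. borel) X I"
    and X: "\<And>i. i \<in> I \<Longrightarrow> distributed M lborel (X i) (d i)"
  shows "distr M (PiM I (\<lambda>_. lborel)) (\<lambda>\<omega>. \<lambda>i\<in>I. X i \<omega>) = PiM I (\<lambda>i. density lborel (d i))"
proof -
  have rv: "random_variable borel (X i)" if "i \<in> I" for i
    using distributed_measurable[OF X[OF that]] by simp
  have "distr M (PiM I (\<lambda>_. lborel)) (\<lambda>\<omega>. \<lambda>i\<in>I. X i \<omega>) =
      distr M (PiM I (\<lambda>_. borel)) (\<lambda>\<omega>. \<lambda>i\<in>I. X i \<omega>)"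
    by (intro distr_cong sets_PiM_cong) auto
  also have "\<dots> = PiM I (\<lambda>i. distr M borel (X i))"
    using indep rv \<open>I \<noteq> {}\<close> by (subst (asm) indep_vars_iff_distr_eq_PiM') auto
  also have "\<dots> = PiM I (\<lambda>i. density lborel (d i))"
  proof (rule PiM_cong)
    fix i assume "i \<in> I"
    then have "distr M borel (X i) = distr M lborel (X i)"
      by (intro distr_cong) auto
    then show "distr M borel (X i) = density lborel (d i)"
      using X[OF \<open>i \<in> I\<close>] by (simp add: distributed_distr_eq_density)
  qed simp
  finally show ?thesis .
qed

lemma (in prob_space) emeasure_distr_indep_var:
  fixes X V :: "'a \<Rightarrow> 'b" and \<phi> :: "'b \<times> 'b \<Rightarrow> 'd"
  assumes indep: "indep_var N X T V"
    and [measurable]: "\<phi> \<in> N \<Otimes>\<^sub>M T \<rightarrow>\<^sub>M S" "A \<in> sets S"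
  shows "emeasure (distr M S (\<lambda>\<omega>. \<phi> (X \<omega>, V \<omega>))) A =
         (\<integral>\<^sup>+ \<omega>. emeasure (distr (distr M N X) S (\<lambda>x. \<phi> (x, V \<omega>))) A \<partial>M)"
proof -
  have joint: "distr M N X \<Otimes>\<^sub>M distr M T V = distr M (N \<Otimes>\<^sub>M T) (\<lambda>\<omega>. (X \<omega>, V \<omega>))"
    and [measurable]: "X \<in> M \<rightarrow>\<^sub>M N" "V \<in> M \<rightarrow>\<^sub>M T"
    using indep by (simp_all add: indep_var_distribution_eq)
  interpret PX: prob_space "distr M N X" by (rule prob_space_distr) measurable
  interpret PV: prob_space "distr M T V" by (rule prob_space_distr) measurable
  interpret XV: pair_sigma_finite "distr M N X" "distr M T V" by unfold_locales
  have [measurable]: "(\<lambda>v. \<integral>\<^sup>+ x. indicator A (\<phi> (x, v)) \<partial>distr M N X) \<in> borel_measurable T"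
    by (rule PX.borel_measurable_nn_integral) measurable
  have "emeasure (distr M S (\<lambda>\<omega>. \<phi> (X \<omega>, V \<omega>))) A = (\<integral>\<^sup>+ \<omega>. indicator A (\<phi> (X \<omega>, V \<omega>)) \<partial>M)"
    by (subst emeasure_distr)
       (auto intro!: nn_integral_cong simp flip: nn_integral_indicator split: split_indicator)
  also have "\<dots> = (\<integral>\<^sup>+ z. indicator A (\<phi> z) \<partial>(distr M N X \<Otimes>\<^sub>M distr M T V))"
    unfolding joint by (subst nn_integral_distr) auto
  also have "\<dots> = (\<integral>\<^sup>+ v. \<integral>\<^sup>+ x. indicator A (\<phi> (x, v)) \<partial>distr M N X \<partial>distr M T V)"
    by (rule XV.nn_integral_snd[symmetric]) measurable
  also have "\<dots> = (\<integral>\<^sup>+ \<omega>. \<integral>\<^sup>+ x. indicator A (\<phi> (x, V \<omega>)) \<partial>distr M N X \<partial>M)"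
    by (rule nn_integral_distr) measurable
  also have "\<dots> = (\<integral>\<^sup>+ \<omega>. emeasure (distr (distr M N X) S (\<lambda>x. \<phi> (x, V \<omega>))) A \<partial>M)"
  proof (intro nn_integral_cong)
    fix \<omega> assume "\<omega> \<in> space M"
    then have [measurable]: "V \<omega> \<in> space T"
      using measurable_space[of V M T] by simp
    have "(\<integral>\<^sup>+ x. indicator A (\<phi> (x, V \<omega>)) \<partial>distr M N X) =
        (\<integral>\<^sup>+ u. indicator A u \<partial>distr (distr M N X) S (\<lambda>x. \<phi> (x, V \<omega>)))"
      by (rule nn_integral_distr[symmetric]) measurable
    then show "(\<integral>\<^sup>+ x. indicator A (\<phi> (x, V \<omega>)) \<partial>distr M N X) =
        emeasure (distr (distr M N X) S (\<lambda>x. \<phi> (x, V \<omega>))) A"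
      by simp
  qed
  finally show ?thesis .
qed

lemma (in prob_space) distributed_indep_var_mixture:
  fixes X V :: "'a \<Rightarrow> 'b" and \<phi> :: "'b \<times> 'b \<Rightarrow> 'd" and H :: "'d \<Rightarrow> 'b \<Rightarrow> ennreal"
  assumes indep: "indep_var N X T V"
    and V: "distributed M T V f"
    and "sigma_finite_measure T" and "sigma_finite_measure S"
    and [measurable]: "\<phi> \<in> N \<Otimes>\<^sub>M T \<rightarrow>\<^sub>M S"
    and [measurable]: "(\<lambda>(u, v). H u v) \<in> borel_measurable (S \<Otimes>\<^sub>M T)"
    and kernel: "AE \<omega> in M. distr (distr M N X) S (\<lambda>x. \<phi> (x, V \<omega>)) = density S (\<lambda>u. H u (V \<omega>))"
  shows "distributed M S (\<lambda>\<omega>. \<phi> (X \<omega>, V \<omega>)) (\<lambda>u. \<integral>\<^sup>+ v. f v * H u v \<partial>T)"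
proof -
  interpret T: sigma_finite_measure T by fact
  interpret S: sigma_finite_measure S by fact
  interpret ST: pair_sigma_finite S T by unfold_locales
  have [measurable]: "X \<in> M \<rightarrow>\<^sub>M N" "V \<in> M \<rightarrow>\<^sub>M T"
    using indep by (auto dest: indep_var_rv1 indep_var_rv2)
  have [measurable]: "f \<in> borel_measurable T"
    using V by (rule distributed_borel_measurable)
  define h where "h u = (\<integral>\<^sup>+ v. f v * H u v \<partial>T)" for u
  have [measurable]: "h \<in> borel_measurable S"
    unfolding h_def by (rule T.borel_measurable_nn_integral) measurable
  have "distr M S (\<lambda>\<omega>. \<phi> (X \<omega>, V \<omega>)) = density S h"
  proof (rule measure_eqI)
    fix A assume "A \<in> sets (distr M S (\<lambda>\<omega>. \<phi> (X \<omega>, V \<omega>)))"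
    then have [measurable]: "A \<in> sets S" by simp
    define G where "G v = (\<integral>\<^sup>+ u. H u v * indicator A u \<partial>S)" for v
    have [measurable]: "G \<in> borel_measurable T"
      unfolding G_def by (rule S.borel_measurable_nn_integral) measurable
    have "emeasure (distr M S (\<lambda>\<omega>. \<phi> (X \<omega>, V \<omega>))) A =
        (\<integral>\<^sup>+ \<omega>. emeasure (distr (distr M N X) S (\<lambda>x. \<phi> (x, V \<omega>))) A \<partial>M)"
      by (rule emeasure_distr_indep_var) fact+
    also have "\<dots> = (\<integral>\<^sup>+ \<omega>. G (V \<omega>) \<partial>M)"
      using kernel by (intro nn_integral_cong_AE) (auto simp: G_def emeasure_density mult.commute)
    also have "\<dots> = (\<integral>\<^sup>+ v. G v \<partial>distr M T V)"
      by (rule nn_integral_distr[symmetric]) measurable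
    also have "\<dots> = (\<integral>\<^sup>+ v. f v * G v \<partial>T)"
      using V by (simp add: distributed_distr_eq_density nn_integral_density)
    also have "\<dots> = (\<integral>\<^sup>+ v. \<integral>\<^sup>+ u. f v * (H u v * indicator A u) \<partial>S \<partial>T)"
      unfolding G_def by (intro nn_integral_cong nn_integral_cmult[symmetric]) measurable
    also have "\<dots> = (\<integral>\<^sup>+ u. \<integral>\<^sup>+ v. f v * (H u v * indicator A u) \<partial>T \<partial>S)"
      by (rule ST.Fubini') measurable
    also have "\<dots> = (\<integral>\<^sup>+ u. h u * indicator A u \<partial>S)"
      unfolding h_def by (intro nn_integral_cong) (simp add: nn_integral_multc[symmetric] mult.assoc)
    also have "\<dots> = emeasure (density S h) A"
      by (simp add: emeasure_density)
    finally show "emeasure (distr M S (\<lambda>\<omega>. \<phi> (X \<omega>, V \<omega>))) A = emeasure (density S h) A" .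
  qed simp
  then show ?thesis
    unfolding distributed_def h_def[symmetric] by simp
qed

lemma (in prob_space) distributed_componentwise_mult:
  fixes I :: "'i set" and X V :: "'i \<Rightarrow> 'a \<Rightarrow> real" and b :: "'i \<Rightarrow> real \<Rightarrow> real"
    and f :: "('i \<Rightarrow> real) \<Rightarrow> ennreal"
  assumes "finite I" and "I \<noteq> {}"
    and [measurable]: "\<And>i. b i \<in> borel_measurable borel"
    and X: "\<And>i. i \<in> I \<Longrightarrow> distributed M lborel (X i) (\<lambda>t. ennreal (b i t))"
    and "indep_vars (\<lambda>_. borel) X I"
    and V: "distributed M (PiM I (\<lambda>_. lborel)) (\<lambda>\<omega>. \<lambda>i\<in>I. V i \<omega>) f"
    and V_pos: "AE \<omega> in M. \<forall>i\<in>I. V i \<omega> > 0"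
    and XV: "indep_var (PiM I (\<lambda>_. borel)) (\<lambda>\<omega>. \<lambda>i\<in>I. X i \<omega>) (PiM I (\<lambda>_. borel)) (\<lambda>\<omega>. \<lambda>i\<in>I. V i \<omega>)"
  shows "distributed M (PiM I (\<lambda>_. lborel)) (\<lambda>\<omega>. \<lambda>i\<in>I. X i \<omega> * V i \<omega>)
           (\<lambda>u. \<integral>\<^sup>+ v. f v * (\<Prod>i\<in>I. ennreal (b i (u i / v i) / v i)) \<partial>PiM I (\<lambda>_. lborel))"
proof -
  let ?S = "PiM I (\<lambda>_. lborel :: real measure)"
  let ?Xv = "\<lambda>\<omega>. \<lambda>i\<in>I. X i \<omega>"
  let ?Vv = "\<lambda>\<omega>. \<lambda>i\<in>I. V i \<omega>"
  define \<phi> where "\<phi> = (\<lambda>(x, v). \<lambda>i\<in>I. (x :: 'i \<Rightarrow> real) i * v i)"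
  define H where "H u v = (\<Prod>i\<in>I. ennreal (b i (u i / v i) / v i))" for u v :: "'i \<Rightarrow> real"
  have sets_S: "sets (PiM I (\<lambda>_. borel)) = sets ?S"
    by (intro sets_PiM_cong) auto
  have indep: "indep_var ?S ?Xv ?S ?Vv"
    using indep_var_compose[OF XV, of id ?S id ?S]
    by (simp add: measurable_cong_sets[OF sets_S refl] comp_def)
  have sigma_finite: "sigma_finite_measure ?S"
    by (rule product_sigma_finite.sigma_finite)
       (auto simp: product_sigma_finite_def lborel.sigma_finite_measure_axioms \<open>finite I\<close>)
  have \<phi>_measurable: "\<phi> \<in> ?S \<Otimes>\<^sub>M ?S \<rightarrow>\<^sub>M ?S"
    and H_measurable: "(\<lambda>(u, v). H u v) \<in> borel_measurable (?S \<Otimes>\<^sub>M ?S)"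
    unfolding \<phi>_def H_def by measurable
  have law_X: "distr M ?S ?Xv = PiM I (\<lambda>i. density lborel (\<lambda>t. ennreal (b i t)))"
    by (rule indep_vars_distr_eq_PiM_density) fact+
  have conditional: "AE \<omega> in M.
      distr (distr M ?S ?Xv) ?S (\<lambda>x. \<phi> (x, ?Vv \<omega>)) = density ?S (\<lambda>u. H u (?Vv \<omega>))"
    using V_pos
  proof eventually_elim
    case (elim \<omega>)
    have "(\<lambda>x. \<phi> (x, ?Vv \<omega>)) = (\<lambda>x. \<lambda>i\<in>I. x i * V i \<omega>)"
      by (auto simp: \<phi>_def fun_eq_iff)
    then show ?case
      unfolding law_X H_def using elim \<open>finite I\<close>
      by (simp add: distr_PiM_density_lborel_scale cong: prod.cong)
  qed
  have product: "(\<lambda>\<omega>. \<phi> (?Xv \<omega>, ?Vv \<omega>)) = (\<lambda>\<omega>. \<lambda>i\<in>I. X i \<omega> * V i \<omega>)"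
    by (auto simp: \<phi>_def fun_eq_iff)
  show ?thesis
    using distributed_indep_var_mixture[OF indep V sigma_finite sigma_finite
        \<phi>_measurable H_measurable conditional]
    unfolding product H_def .
qed

lemma borel_measurable_beta1_density [measurable]: "beta1_density z a \<in> borel_measurable borel"
  unfolding beta1_density_def by measurable

lemma beta1_density_nonneg: "z > -1 \<Longrightarrow> a > 0 \<Longrightarrow> 0 \<le> beta1_density z a t"
  unfolding beta1_density_def by (auto intro!: divide_nonneg_nonneg Gamma_real_pos less_imp_le)

lemma beta1_density_divide_eq_0:
  assumes "0 < u" and "\<not> u < v"
  shows "beta1_density z a (u / v) = 0"
proof -
  have "\<not> (0 < u / v \<and> u / v < 1)"
    using assms by (cases "v > 0") (auto simp: zero_less_divide_iff divide_less_eq)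
  then show ?thesis
    unfolding beta1_density_def by (rule if_not_P)
qed

lemma beta1_density_divide:
  fixes z a u v :: real
  assumes z: "z > -1" and a: "a > 0" and u: "0 < u" and uv: "u < v"
  shows "Gamma (z + 1) / Gamma (a + z + 1) * (beta1_density z a (u / v) / v)
       = u powr z / Gamma a * ((v - u) powr (a - 1) * v powr (- z - a))"
proof -
  have v: "v > 0" using u uv by simp
  have "0 < u / v" "u / v < 1" "1 - u / v = (v - u) / v"
    using u v uv by (auto simp: field_simps)
  then have "beta1_density z a (u / v) / v =
      Gamma (a + z + 1) / (Gamma a * Gamma (z + 1)) * u powr z * (v - u) powr (a - 1)
        / (v powr z * v powr (a - 1) * v)"
    using u v by (simp add: beta1_density_def powr_divide field_simps)
  also have "v powr z * v powr (a - 1) * v = v powr (z + (a - 1) + 1)"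
    unfolding powr_add using v by simp
  also have "z + (a - 1) + 1 = z + a"
    by simp
  finally have "beta1_density z a (u / v) / v =
      Gamma (a + z + 1) / (Gamma a * Gamma (z + 1)) * u powr z * (v - u) powr (a - 1) / v powr (z + a)" .
  moreover have "v powr (- z - a) = 1 / v powr (z + a)"
    using powr_minus_divide[of v "z + a"] by simp
  moreover have "Gamma (z + 1) \<noteq> 0" "Gamma (a + z + 1) \<noteq> 0" "Gamma a \<noteq> 0"
    using z a by (auto intro!: Gamma_real_pos less_imp_neq[symmetric])
  ultimately show ?thesis
    by (simp add: field_simps)
qed

lemma beta1_mixture_eq_kober2:
  fixes k :: nat and \<zeta> \<alpha> u :: "nat \<Rightarrow> real" and f :: "(nat \<Rightarrow> real) \<Rightarrow> ennreal"
  assumes z: "\<And>j. j < k \<Longrightarrow> \<zeta> j > -1" and a: "\<And>j. j < k \<Longrightarrow> \<alpha> j > 0"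
    and u: "\<And>j. j < k \<Longrightarrow> u j > 0"
    and [measurable]: "f \<in> borel_measurable (PiM {..<k} (\<lambda>_. lborel))"
  shows "ennreal (\<Prod>j<k. Gamma (\<zeta> j + 1) / Gamma (\<alpha> j + \<zeta> j + 1)) *
      (\<integral>\<^sup>+ v. f v * (\<Prod>j<k. ennreal (beta1_density (\<zeta> j) (\<alpha> j) (u j / v j) / v j))
         \<partial>PiM {..<k} (\<lambda>_. lborel))
    = kober2 k \<zeta> \<alpha> f u"
proof -
  let ?c = "\<Prod>j<k. Gamma (\<zeta> j + 1) / Gamma (\<alpha> j + \<zeta> j + 1)"
  let ?K = "\<Prod>j<k. u j powr \<zeta> j / Gamma (\<alpha> j)"
  let ?Q = "\<lambda>v. \<Prod>j<k. (v j - u j) powr (\<alpha> j - 1) * v j powr (- \<zeta> j - \<alpha> j)"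
  let ?b = "\<lambda>v j. beta1_density (\<zeta> j) (\<alpha> j) (u j / v j) / v j"
  have "0 < \<zeta> j + 1" "0 < \<alpha> j + \<zeta> j + 1" if "j < k" for j
    using z[OF that] a[OF that] by auto
  then have c_nonneg: "?c \<ge> 0" and K_nonneg: "?K \<ge> 0"
    using a by (auto intro!: prod_nonneg divide_nonneg_nonneg less_imp_le[OF Gamma_real_pos])
  have kernel: "ennreal ?c * (\<Prod>j<k. ennreal (?b v j)) =
      ennreal ?K * (indicator {v. \<forall>j<k. u j < v j} v * ennreal (?Q v))" for v
  proof (cases "\<forall>j<k. u j < v j")
    case True
    then have b_nonneg: "j < k \<Longrightarrow> ?b v j \<ge> 0" for j
      using u[of j] z a by (intro divide_nonneg_pos beta1_density_nonneg) (auto intro: less_trans)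
    have "ennreal ?c * (\<Prod>j<k. ennreal (?b v j)) = ennreal ?c * ennreal (\<Prod>j<k. ?b v j)"
      by (subst prod_ennreal) (use b_nonneg in auto)
    also have "\<dots> = ennreal (?c * (\<Prod>j<k. ?b v j))"
      by (intro ennreal_mult[symmetric] c_nonneg prod_nonneg) (use b_nonneg in auto)
    also have "?c * (\<Prod>j<k. ?b v j) = ?K * ?Q v"
      unfolding prod.distrib[symmetric]
      by (intro prod.cong refl beta1_density_divide) (use z a u True in auto)
    also have "ennreal (?K * ?Q v) = ennreal ?K * ennreal (?Q v)"
      by (intro ennreal_mult K_nonneg prod_nonneg) auto
    finally show ?thesis
      using True by simp
  next
    case False
    then obtain j where "j < k" "\<not> u j < v j" by blast
    then have "?b v j = 0"
      using u by (simp add: beta1_density_divide_eq_0)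
    with \<open>j < k\<close> have "(\<Prod>j<k. ennreal (?b v j)) = 0"
      by (intro prod_zero bexI[of _ j]) auto
    with False show ?thesis by simp
  qed
  have "ennreal ?c * (\<integral>\<^sup>+ v. f v * (\<Prod>j<k. ennreal (?b v j)) \<partial>PiM {..<k} (\<lambda>_. lborel))
      = (\<integral>\<^sup>+ v. ennreal ?c * (f v * (\<Prod>j<k. ennreal (?b v j))) \<partial>PiM {..<k} (\<lambda>_. lborel))"
    by (rule nn_integral_cmult[symmetric]) measurable
  also have "\<dots> = (\<integral>\<^sup>+ v. ennreal ?K * (indicator {v. \<forall>j<k. u j < v j} v * ennreal (?Q v) * f v)
      \<partial>PiM {..<k} (\<lambda>_. lborel))"
    by (intro nn_integral_cong, subst mult.left_commute, subst kernel) (simp add: ac_simps)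
  also have "\<dots> = kober2 k \<zeta> \<alpha> f u"
    unfolding kober2_def by (rule nn_integral_cmult) measurable
  finally show ?thesis .
qed

theorem theorem1p1:
  fixes M :: "'a measure" and k :: nat
    and \<zeta> \<alpha> :: "nat \<Rightarrow> real"
    and X V :: "nat \<Rightarrow> 'a \<Rightarrow> real"
    and f g :: "(nat \<Rightarrow> real) \<Rightarrow> ennreal"
  assumes "prob_space M"
    and "k \<ge> 1"
    and "\<And>j. j < k \<Longrightarrow> \<zeta> j > -1"
    and "\<And>j. j < k \<Longrightarrow> \<alpha> j > 0"
    and "\<And>j. j < k \<Longrightarrow> distributed M lborel (X j) (\<lambda>t. ennreal (beta1_density (\<zeta> j) (\<alpha> j) t))"
    and "prob_space.indep_vars M (\<lambda>_. borel) X {..<k}"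
    and "distributed M (PiM {..<k} (\<lambda>_. lborel)) (\<lambda>\<omega>. \<lambda>j\<in>{..<k}. V j \<omega>) f"
    and "AE \<omega> in M. \<forall>j<k. V j \<omega> > 0"
    and "prob_space.indep_var M
           (PiM {..<k} (\<lambda>_. borel)) (\<lambda>\<omega>. \<lambda>j\<in>{..<k}. X j \<omega>)
           (PiM {..<k} (\<lambda>_. borel)) (\<lambda>\<omega>. \<lambda>j\<in>{..<k}. V j \<omega>)"
    and "distributed M (PiM {..<k} (\<lambda>_. lborel)) (\<lambda>\<omega>. \<lambda>j\<in>{..<k}. X j \<omega> * V j \<omega>) g"
  shows "AE u in PiM {..<k} (\<lambda>_. lborel).
           (\<forall>j<k. u j > 0) \<longrightarrow>
           ennreal (\<Prod>j<k. Gamma (\<zeta> j + 1) / Gamma (\<alpha> j + \<zeta> j + 1)) * g u = kober2 k \<zeta> \<alpha> f u"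
proof -
  interpret prob_space M by fact
  have "distributed M (PiM {..<k} (\<lambda>_. lborel)) (\<lambda>\<omega>. \<lambda>j\<in>{..<k}. X j \<omega> * V j \<omega>)
      (\<lambda>u. \<integral>\<^sup>+ v. f v * (\<Prod>j<k. ennreal (beta1_density (\<zeta> j) (\<alpha> j) (u j / v j) / v j))
        \<partial>PiM {..<k} (\<lambda>_. lborel))"
    using assms(2,5-9) by (intro distributed_componentwise_mult) (auto simp: lessThan_empty_iff)
  then have "AE u in PiM {..<k} (\<lambda>_. lborel). g u =
      (\<integral>\<^sup>+ v. f v * (\<Prod>j<k. ennreal (beta1_density (\<zeta> j) (\<alpha> j) (u j / v j) / v j))
        \<partial>PiM {..<k} (\<lambda>_. lborel))"
    by (rule distributed_unique[OF assms(10)])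
  then show ?thesis
  proof eventually_elim
    case (elim u)
    show ?case
      using beta1_mixture_eq_kober2[OF assms(3,4) _ distributed_borel_measurable[OF assms(7)],
          where u = u]
      by (simp add: elim)
  qed
qed

end
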